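(* Let $t < n/2$. Then \[\mathrm{Span}\{ 1_{\mathcal{F}_T} \in \mathbb{R}[\mathcal{M}_{2n}] : T \text{ a set of } t \text{ pairwise disjoint edges of } K_{2n} \} \subseteq U_t,\] where $\mathcal{F}_T = \{m \in \mathcal{M}_{2n} : T \subseteq m\}$ and $1_{\mathcal{F}_T}$ is its characteristic function.
   Context: $\mathcal{M}_{2n}$ is the set of perfect matchings of the complete graph $K_{2n}$ on $[2n]$; $S_{2n}$ acts on $\mathcal{M}_{2n}$ by $\sigma m = \{\{\sigma(a),\sigma(b)\} : \{a,b\} \in m\}$. Let $m^* = \{\{1,2\},\{3,4\},\dots,\{2n-1,2n\}\}$. For $f \in \mathbb{R}[\mathcal{M}_{2n}]$ (real functions on $\mathcal{M}_{2n}$) define its lift $\tilde f \in \mathbb{R}[S_{2n}]$ by $\tilde f(\sigma) = f(\sigma m^* )$, and for an irreducible representation $\rho$ of $S_{2n}$ define the Fourier transform $\hat f(\rho) = \frac{1}{(2n)!}\sum_{\sigma \in S_{2n}} \tilde f(\sigma)\rho(\sigma)$. Irreducible representations of $S_{2n}$ are indexed by partitions of $2n$. Partitions of the same integer are ordered reverse-lexicographically: $\mu \leq \lambda$ iff $\mu = \lambda$ or $\mu_j < \lambda_j$ at the first index $j$ where they differ. For $\lambda=(\lambda_1,\dots,\lambda_k)$, $2\lambda = (2\lambda_1,\dots,2\lambda_k)$; in particular $2(n-t,1^t) = (2(n-t),2,\dots,2)$ with $t$ parts equal to $2$. Define $U_t = \{ f \in \mathbb{R}[\mathcal{M}_{2n}]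 : \hat f(\rho) = 0 \text{ for every irreducible } \rho \vdash 2n \text{ with } \rho < 2(n-t,1^t)\}$. *)

theory Defs
  imports "HOL-Analysis.Analysis" "HOL-Library.Function_Algebras"
begin

definition edges_K :: "nat \<Rightarrow> nat set set" where
  "edges_K n = {e. e \<subseteq> {1..2*n} \<and> card e = 2}"

definition matchings :: "nat \<Rightarrow> nat set set set" where
  "matchings n = {m. m \<subseteq> edges_K n \<and> (\<forall>k\<in>{1..2*n}. \<exists>!e. e \<in> m \<and> k \<in> e)}"

definition mstar :: "nat \<Rightarrow> nat set set" where
  "mstar n = {{2*i - 1, 2*i} | i. i \<in> {1..n}}"

definition act_matching :: "(nat \<Rightarrow> nat) \<Rightarrow> nat set set \<Rightarrow> nat set set" where
  "act_matching \<sigma> m = (\<lambda>e. \<sigma> ` e) ` m"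

definition lift :: "nat \<Rightarrow> (nat set set \<Rightarrow> real) \<Rightarrow> (nat \<Rightarrow> nat) \<Rightarrow> real" where
  "lift n f \<sigma> = f (act_matching \<sigma> (mstar n))"

definition is_partition :: "nat \<Rightarrow> nat list \<Rightarrow> bool" where
  "is_partition N lam \<longleftrightarrow> sorted (rev lam) \<and> (\<forall>x\<in>set lam. 0 < x) \<and> sum_list lam = N"

definition part :: "nat list \<Rightarrow> nat \<Rightarrow> nat" where
  "part lam i = (if i < length lam then lam ! i else 0)"

definition part_less :: "nat list \<Rightarrow> nat list \<Rightarrow> bool" where
  "part_less mu lam \<longleftrightarrow> (\<exists>j. (\<forall>i<j. part mu i = part lam i) \<and> part mu j < part lam j)"

definition young_cells :: "nat list \<Rightarrow> (nat \<times> nat) set" where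
  "young_cells lam = {(i, j). i < length lam \<and> j < lam ! i}"

definition is_tableau :: "nat \<Rightarrow> nat list \<Rightarrow> (nat \<times> nat \<Rightarrow> nat) \<Rightarrow> bool" where
  "is_tableau N lam t \<longleftrightarrow> bij_betw t (young_cells lam) {1..N}"

text \<open>A tabloid is represented by its row function: entry k is sent to the row containing it
  (and entries outside {1..N} to 0).\<close>
definition tabloid :: "nat \<Rightarrow> nat list \<Rightarrow> (nat \<times> nat \<Rightarrow> nat) \<Rightarrow> (nat \<Rightarrow> nat)" where
  "tabloid N lam t = (\<lambda>k. if k \<in> {1..N} then fst (inv_into (young_cells lam) t k) else 0)"

definition column_stab :: "nat \<Rightarrow> nat list \<Rightarrow> (nat \<times> nat \<Rightarrow> nat) \<Rightarrow> (nat \<Rightarrow> nat) set" where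
  "column_stab N lam t = {\<pi>. \<pi> permutes {1..N} \<and>
     (\<forall>k\<in>{1..N}. snd (inv_into (young_cells lam) t (\<pi> k)) = snd (inv_into (young_cells lam) t k))}"

definition polytabloid :: "nat \<Rightarrow> nat list \<Rightarrow> (nat \<times> nat \<Rightarrow> nat) \<Rightarrow> ((nat \<Rightarrow> nat) \<Rightarrow> real)" where
  "polytabloid N lam t = (\<lambda>r. \<Sum>\<pi>\<in>column_stab N lam t.
      of_int (sign \<pi>) * (if r = tabloid N lam (\<pi> \<circ> t) then 1 else 0))"

definition specht :: "nat \<Rightarrow> nat list \<Rightarrow> ((nat \<Rightarrow> nat) \<Rightarrow> real) set" where
  "specht N lam = module.span (\<lambda>c v x. c * v x) {polytabloid N lam t | t. is_tableau N lam t}"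

text \<open>Permutation action on M^lambda: sigma {t} = {sigma o t}, i.e. on row functions
  (sigma r)(k) = r (sigma^-1 k); extended linearly to functions on tabloids.\<close>
definition rep_act :: "(nat \<Rightarrow> nat) \<Rightarrow> ((nat \<Rightarrow> nat) \<Rightarrow> real) \<Rightarrow> ((nat \<Rightarrow> nat) \<Rightarrow> real)" where
  "rep_act \<sigma> v = (\<lambda>r. v (r \<circ> \<sigma>))"

text \<open>Fourier transform hat f(rho_lambda) as the operator on the Specht module S^lambda;
  it vanishes iff it sends every vector of S^lambda to 0.\<close>
definition fourier_zero :: "nat \<Rightarrow> (nat set set \<Rightarrow> real) \<Rightarrow> nat list \<Rightarrow> bool" where
  "fourier_zero n f lam \<longleftrightarrow> (\<forall>v\<in>specht (2*n) lam.
     (\<lambda>r. (1 / fact (2*n)) * (\<Sum>\<sigma>\<in>{\<sigma>. \<sigma> permutes {1..2*n}}. lift n f \<sigma> * rep_act \<sigma> v r)) = (\<lambda>_. 0))"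

definition U :: "nat \<Rightarrow> nat \<Rightarrow> (nat set set \<Rightarrow> real) set" where
  "U n t = {f. \<forall>\<rho>. is_partition (2*n) \<rho> \<and> part_less \<rho> (2*(n-t) # replicate t 2) \<longrightarrow> fourier_zero n f \<rho>}"

definition family :: "nat \<Rightarrow> nat set set \<Rightarrow> nat set set set" where
  "family n T = {m \<in> matchings n. T \<subseteq> m}"

end

theory Submission
  imports Defs
begin

(* Write e_tau for a polytabloid of shape rho and 1_T for the indicator of the matchings
   containing T.  Every coordinate of the Fourier sum of 1_T applied to e_tau vanishes by a
   sign-reversing involution on S_2n: for every sigma there are two distinct entries a, b
   lying in the same column of sigma tau and in the same class of the partition of [2n]
   into the edges of T and the complement of their union; composing sigma with the
   transposition (a b) fixes the lift of 1_T at sigma and negates sigma e_tau.  Such a pair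
   exists by pigeonhole.  The 2(n-t) points outside the edges need 2(n-t) columns, so
   rho < (2(n-t), 2^t) forces rho to agree with it on its first row, to have rows
   1, ..., j-1 of length 2 and row j of length at most 1, for some j <= t.
   Then only 2(n-t) - 1 + j - 1 cells lie outside column 0, but at least 2(n-t) - 1 + t
   points must avoid it: all but one of the points outside the edges, and one point of
   each edge. *)

lemma card_Union_disjoint_edges:
  assumes TE: "T \<subseteq> edges_K n" and disj: "\<forall>e\<in>T. \<forall>e'\<in>T. e \<noteq> e' \<longrightarrow> e \<inter> e' = {}"
  shows "card (\<Union>T) = 2 * card T"
proof -
  have edge: "e \<subseteq> {1..2*n}" "card e = 2" if "e \<in> T" for e
    using TE that unfolding edges_K_def by auto
  have "finite e" if "e \<in> T" for e
    using edge(2)[OF that] by (intro card_ge_0_finite) simp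
  then have "card (\<Union>T) = sum card T"
    using disj by (intro card_Union_disjoint) (auto simp: pairwise_def disjnt_def)
  also have "\<dots> = 2 * card T"
    using edge by simp
  finally show ?thesis .
qed

lemma card_le_card_Union_Int:
  assumes disj: "\<forall>e\<in>T. \<forall>e'\<in>T. e \<noteq> e' \<longrightarrow> e \<inter> e' = {}"
    and fin: "finite (\<Union>T)" and meets: "\<And>e. e \<in> T \<Longrightarrow> e \<inter> Q \<noteq> {}"
  shows "card T \<le> card (\<Union>T \<inter> Q)"
proof -
  have "\<forall>e\<in>T. \<exists>k. k \<in> e \<inter> Q"
    using meets by blast
  from bchoice[OF this] obtain h where h: "\<forall>e\<in>T. h e \<in> e \<inter> Q" ..
  have "inj_on h T"
  proof (rule inj_onI)
    fix e e' assume ee: "e \<in> T" "e' \<in> T" "h e = h e'"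
    then have "h e \<in> e \<inter> e'"
      using h by auto
    then show "e = e'"
      using disj ee(1,2) by blast
  qed
  moreover have "h ` T \<subseteq> \<Union>T \<inter> Q"
    using h by blast
  moreover have "finite (\<Union>T \<inter> Q)"
    using fin by simp
  ultimately show ?thesis
    by (rule card_inj_on_le)
qed

lemma finite_young_cells: "finite (young_cells \<rho>)"
proof (rule finite_subset)
  show "young_cells \<rho> \<subseteq> Sigma {..<length \<rho>} (\<lambda>i. {..<\<rho> ! i})"
    unfolding young_cells_def by auto
qed auto

lemma part_antimono:
  assumes "sorted (rev \<rho>)" "i \<le> j"
  shows "part \<rho> j \<le> part \<rho> i"
  using assms sorted_rev_nth_mono[of \<rho> i j] unfolding part_def by auto

lemma young_cells_snd_less_part:
  assumes "(i, c) \<in> young_cells \<rho>"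
  shows "c < part \<rho> i"
  using assms unfolding young_cells_def part_def by auto

lemma part_less_hook_cases:
  assumes "part_less \<rho> (m # replicate t 2)"
  obtains "part \<rho> 0 < m"
  | j where "1 \<le> j" "j \<le> t" "part \<rho> 0 = m" "\<And>i. 1 \<le> i \<Longrightarrow> i < j \<Longrightarrow> part \<rho> i = 2"
      "part \<rho> j \<le> 1"
proof -
  have hook: "part (m # replicate t 2) i = (if i = 0 then m else if i \<le> t then 2 else 0)" for i
    unfolding part_def by (cases i) auto
  from assms obtain j where eq: "\<forall>i<j. part \<rho> i = part (m # replicate t 2) i"
    and less: "part \<rho> j < part (m # replicate t 2) j"
    unfolding part_less_def by blast
  show thesis
  proof (cases "j = 0")
    case True
    then show thesis using that(1) less hook by simp
  next
    case False
    then have jt: "j \<le> t"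
      using less hook by (cases "j \<le> t") auto
    show thesis
    proof (rule that(2))
      show "1 \<le> j" "j \<le> t" using False jt by auto
      show "part \<rho> 0 = m" using eq False hook by auto
      show "part \<rho> i = 2" if "1 \<le> i" "i < j" for i
        using eq hook that jt by auto
      show "part \<rho> j \<le> 1" using less hook False jt by auto
    qed
  qed
qed

lemma card_young_cells_off_first_column:
  assumes sorted: "sorted (rev \<rho>)" and row0: "part \<rho> 0 = m"
    and rows: "\<And>i. 1 \<le> i \<Longrightarrow> i < j \<Longrightarrow> part \<rho> i = 2" and rowj: "part \<rho> j \<le> 1"
  shows "card {p \<in> young_cells \<rho>. 1 \<le> snd p} \<le> (m - 1) + (j - 1)"
proof -
  have "{p \<in> young_cells \<rho>. 1 \<le> snd p} \<subseteq> (\<lambda>c. (0, c)) ` {1..<m} \<union> (\<lambda>i. (i, 1)) ` {1..<j}"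
  proof
    fix p assume "p \<in> {p \<in> young_cells \<rho>. 1 \<le> snd p}"
    then obtain i c where p: "p = (i, c)" and c: "1 \<le> c" "c < part \<rho> i"
      using young_cells_snd_less_part by (cases p) auto
    then have "i < j"
      using part_antimono[OF sorted, of j i] rowj by (cases "j \<le> i") auto
    show "p \<in> (\<lambda>c. (0, c)) ` {1..<m} \<union> (\<lambda>i. (i, 1)) ` {1..<j}"
    proof (cases "i = 0")
      case True
      then show ?thesis using p c row0 by auto
    next
      case False
      then show ?thesis using p c rows[of i] \<open>i < j\<close> by auto
    qed
  qed
  then have "card {p \<in> young_cells \<rho>. 1 \<le> snd p}
      \<le> card ((\<lambda>c. (0::nat, c)) ` {1..<m} \<union> (\<lambda>i. (i, 1::nat)) ` {1..<j})"
    by (intro card_mono) auto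
  also have "\<dots> \<le> card ((\<lambda>c. (0::nat, c)) ` {1..<m}) + card ((\<lambda>i. (i, 1::nat)) ` {1..<j})"
    by (rule card_Un_le)
  also have "\<dots> \<le> card {1..<m} + card {1..<j}"
    by (intro add_mono card_image_le) auto
  finally show ?thesis by simp
qed

lemma card_outside_disjoint_edges:
  assumes TE: "T \<subseteq> edges_K n" and disj: "\<forall>e\<in>T. \<forall>e'\<in>T. e \<noteq> e' \<longrightarrow> e \<inter> e' = {}"
  shows "card ({1..2*n} - \<Union>T) = 2 * (n - card T)"
proof -
  have "\<Union>T \<subseteq> {1..2*n}"
    using TE unfolding edges_K_def by blast
  then have "card ({1..2*n} - \<Union>T) = 2*n - card (\<Union>T)"
    by (simp add: card_Diff_subset finite_subset)
  then show ?thesis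
    using card_Union_disjoint_edges[OF TE disj] by simp
qed

lemma card_outside_disjoint_edges_le:
  assumes TE: "T \<subseteq> edges_K n" and disj: "\<forall>e\<in>T. \<forall>e'\<in>T. e \<noteq> e' \<longrightarrow> e \<inter> e' = {}"
    and sep: "\<And>a b. a \<in> {1..2*n} \<Longrightarrow> b \<in> {1..2*n} \<Longrightarrow> a \<noteq> b \<Longrightarrow>
      \<forall>e\<in>T. a \<in> e \<longleftrightarrow> b \<in> e \<Longrightarrow> col a \<noteq> col b"
    and Q: "finite Q" "col ` ({1..2*n} - \<Union>T) \<subseteq> Q"
  shows "2 * (n - card T) \<le> card Q"
proof -
  have "inj_on col ({1..2*n} - \<Union>T)"
    using sep by (intro inj_onI) (metis Diff_iff Union_iff)
  then show ?thesis
    using card_inj_on_le[OF _ Q(2,1)] card_outside_disjoint_edges[OF TE disj] by simp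
qed

lemma card_outside_column_ge:
  assumes TE: "T \<subseteq> edges_K n" and disj: "\<forall>e\<in>T. \<forall>e'\<in>T. e \<noteq> e' \<longrightarrow> e \<inter> e' = {}"
    and sep: "\<And>a b. a \<in> {1..2*n} \<Longrightarrow> b \<in> {1..2*n} \<Longrightarrow> a \<noteq> b \<Longrightarrow>
      \<forall>e\<in>T. a \<in> e \<longleftrightarrow> b \<in> e \<Longrightarrow> col a \<noteq> col b"
  shows "2 * (n - card T) - 1 + card T \<le> card {k \<in> {1..2*n}. col k \<noteq> c}"
proof -
  define B where "B = {1..2*n} - \<Union>T"
  define Q where "Q = {k \<in> {1..2*n}. col k \<noteq> c}"
  have edge: "e \<subseteq> {1..2*n}" "card e = 2" if "e \<in> T" for e
    using TE that unfolding edges_K_def by auto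
  have "inj_on col B"
    unfolding B_def using sep by (intro inj_onI) (metis Diff_iff Union_iff)
  then have "card (B - Q) \<le> card {c}"
    by (intro card_inj_on_le) (auto simp: B_def Q_def intro: inj_on_subset)
  then have "2 * (n - card T) \<le> card (B \<inter> Q) + 1"
    using card_outside_disjoint_edges[OF TE disj] card_Int_Diff[of B Q]
    by (simp add: B_def)
  moreover have "card T \<le> card (\<Union>T \<inter> Q)"
  proof (rule card_le_card_Union_Int[OF disj])
    show "finite (\<Union>T)"
      using edge by (meson finite_atLeastAtMost finite_subset Union_least)
    show "e \<inter> Q \<noteq> {}" if e: "e \<in> T" for e
    proof -
      obtain a b where ab: "a \<noteq> b" "e = {a, b}"
        using edge(2)[OF e] by (meson card_2_iff)
      moreover have "\<forall>e'\<in>T. a \<in> e' \<longleftrightarrow> b \<in> e'"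
        using disj e ab(2) by blast
      ultimately have "col a \<noteq> col b"
        using sep edge(1)[OF e] by auto
      then show ?thesis
        using ab edge(1)[OF e] by (auto simp: Q_def)
    qed
  qed
  moreover have "card (B \<inter> Q) + card (\<Union>T \<inter> Q) \<le> card Q"
    by (subst card_Un_disjoint[symmetric]) (auto simp: B_def Q_def intro: card_mono)
  ultimately show ?thesis
    by (simp add: Q_def)
qed

lemma exists_column_pair_in_same_class:
  fixes g :: "nat \<Rightarrow> nat \<times> nat"
  assumes nt: "2 * t < n" and TE: "T \<subseteq> edges_K n" and cT: "card T = t"
    and disj: "\<forall>e\<in>T. \<forall>e'\<in>T. e \<noteq> e' \<longrightarrow> e \<inter> e' = {}"
    and sorted: "sorted (rev \<rho>)" and less: "part_less \<rho> (2 * (n - t) # replicate t 2)"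
    and g: "inj_on g {1..2*n}" "g ` {1..2*n} \<subseteq> young_cells \<rho>"
  shows "\<exists>a\<in>{1..2*n}. \<exists>b\<in>{1..2*n}. a \<noteq> b \<and> (\<forall>e\<in>T. a \<in> e \<longleftrightarrow> b \<in> e) \<and> snd (g a) = snd (g b)"
proof (rule ccontr)
  assume "\<not> ?thesis"
  then have sep: "\<And>a b. a \<in> {1..2*n} \<Longrightarrow> b \<in> {1..2*n} \<Longrightarrow> a \<noteq> b \<Longrightarrow>
      \<forall>e\<in>T. a \<in> e \<longleftrightarrow> b \<in> e \<Longrightarrow> snd (g a) \<noteq> snd (g b)"
    by blast
  have first_row: "snd (g k) < part \<rho> 0" if k: "k \<in> {1..2*n}" for k
  proof -
    obtain i c where "g k = (i, c)" "(i, c) \<in> young_cells \<rho>"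
      using g(2) k by (metis image_subset_iff prod.exhaust)
    then show ?thesis
      using young_cells_snd_less_part part_antimono[OF sorted, of 0 i]
      by (metis order_less_le_trans snd_conv zero_le)
  qed
  from less show False
  proof (cases rule: part_less_hook_cases)
    case 1
    have "2 * (n - card T) \<le> card {..<part \<rho> 0}"
      by (rule card_outside_disjoint_edges_le[where col = "\<lambda>k. snd (g k)", OF TE disj sep])
         (use first_row in auto)
    then show False
      using 1 cT by simp
  next
    case (2 j)
    have "card {k \<in> {1..2*n}. snd (g k) \<noteq> 0} \<le> card {p \<in> young_cells \<rho>. 1 \<le> snd p}"
      using g finite_young_cells by (intro card_inj_on_le) (auto intro: inj_on_subset)
    also have "\<dots> \<le> (2 * (n - t) - 1) + (j - 1)"
      using card_young_cells_off_first_column[OF sorted 2(3-5)] by blast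
    finally show False
      using card_outside_column_ge[where col = "\<lambda>k. snd (g k)", OF TE disj sep, of 0] cT nt 2(1,2)
      by linarith
  qed
qed

lemma tabloid_transpose_comp:
  assumes X: "bij_betw X (young_cells lam) {1..N}" and ab: "a \<in> {1..N}" "b \<in> {1..N}"
  shows "tabloid N lam (Transposition.transpose a b \<circ> X) = tabloid N lam X \<circ> Transposition.transpose a b"
proof
  fix k
  let ?s = "Transposition.transpose a b"
  have sN: "?s k \<in> {1..N} \<longleftrightarrow> k \<in> {1..N}"
    using ab by (cases "k = a"; cases "k = b") auto
  show "tabloid N lam (?s \<circ> X) k = (tabloid N lam X \<circ> ?s) k"
  proof (cases "k \<in> {1..N}")
    case True
    have inj: "inj_on (?s \<circ> X) (young_cells lam)"
      using X by (simp add: bij_betw_def comp_inj_on)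
    have "?s k \<in> X ` young_cells lam"
      using X True sN by (simp add: bij_betw_def)
    then have x: "inv_into (young_cells lam) X (?s k) \<in> young_cells lam"
      "X (inv_into (young_cells lam) X (?s k)) = ?s k"
      by (auto intro: inv_into_into f_inv_into_f)
    have "inv_into (young_cells lam) (?s \<circ> X) k = inv_into (young_cells lam) X (?s k)"
      by (rule inv_into_f_eq[OF inj x(1)]) (simp add: x(2))
    then show ?thesis
      using True sN unfolding tabloid_def by simp
  next
    case False
    then show ?thesis
      using sN unfolding tabloid_def comp_def by (simp only: if_False)
  qed
qed

lemma polytabloid_comp_transpose:
  assumes tau: "is_tableau N lam \<tau>" and ab: "a \<in> {1..N}" "b \<in> {1..N}" "a \<noteq> b"
    and col: "snd (inv_into (young_cells lam) \<tau> a) = snd (inv_into (young_cells lam) \<tau> b)"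
  shows "polytabloid N lam \<tau> (r \<circ> Transposition.transpose a b) = - polytabloid N lam \<tau> r"
proof -
  let ?s = "Transposition.transpose a b"
  let ?C = "column_stab N lam \<tau>"
  let ?col = "\<lambda>k. snd (inv_into (young_cells lam) \<tau> k)"
  have s: "?s permutes {1..N}"
    using ab by (simp add: permutes_swap_id)
  have col_s: "?col (?s k) = ?col k" for k
    using col by (cases "k = a"; cases "k = b") auto
  have perm: "\<pi> permutes {1..N}" if "\<pi> \<in> ?C" for \<pi>
    using that unfolding column_stab_def by blast
  have stab: "?s \<circ> \<pi> \<in> ?C" if "\<pi> \<in> ?C" for \<pi>
    using that permutes_compose[OF perm[OF that] s] col_s unfolding column_stab_def by simp
  have sign: "sign (?s \<circ> \<pi>) = - sign \<pi>" if "\<pi> \<in> ?C" for \<pi>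
    using perm[OF that] s ab
    by (simp add: sign_compose sign_swap_id permutes_imp_permutation[of "{1..N}"])
  have tabloid: "(r \<circ> ?s = tabloid N lam (?s \<circ> (\<pi> \<circ> \<tau>))) \<longleftrightarrow> (r = tabloid N lam (\<pi> \<circ> \<tau>))"
    if "\<pi> \<in> ?C" for \<pi>
  proof -
    have "bij_betw (\<pi> \<circ> \<tau>) (young_cells lam) {1..N}"
      using tau perm[OF that] unfolding is_tableau_def by (meson bij_betw_trans permutes_imp_bij)
    then have "tabloid N lam (?s \<circ> (\<pi> \<circ> \<tau>)) = tabloid N lam (\<pi> \<circ> \<tau>) \<circ> ?s"
      using tabloid_transpose_comp ab by blast
    moreover have "(r \<circ> ?s = q \<circ> ?s) \<longleftrightarrow> r = q" for q :: "nat \<Rightarrow> nat"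
      by (metis comp_assoc comp_id transpose_comp_involutory)
    ultimately show ?thesis by simp
  qed
  have "polytabloid N lam \<tau> (r \<circ> ?s) =
      (\<Sum>\<pi>\<in>?C. of_int (sign (?s \<circ> \<pi>)) * (if r \<circ> ?s = tabloid N lam ((?s \<circ> \<pi>) \<circ> \<tau>) then 1 else 0))"
    unfolding polytabloid_def
    by (rule sum.reindex_bij_witness[of _ "\<lambda>\<pi>. ?s \<circ> \<pi>" "\<lambda>\<pi>. ?s \<circ> \<pi>"])
       (auto simp: stab comp_assoc[symmetric])
  also have "\<dots> = (\<Sum>\<pi>\<in>?C. - (of_int (sign \<pi>) * (if r = tabloid N lam (\<pi> \<circ> \<tau>) then 1 else 0)))"
    by (rule sum.cong) (auto simp: sign tabloid comp_assoc)
  also have "\<dots> = - polytabloid N lam \<tau> r"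
    unfolding polytabloid_def by (simp add: sum_negf)
  finally show ?thesis .
qed

lemma rep_act_transpose_comp_polytabloid:
  assumes tau: "is_tableau N lam \<tau>" and \<sigma>: "\<sigma> permutes {1..N}"
    and ab: "a \<in> {1..N}" "b \<in> {1..N}" "a \<noteq> b"
    and col: "snd (inv_into (young_cells lam) \<tau> (inv \<sigma> a)) = snd (inv_into (young_cells lam) \<tau> (inv \<sigma> b))"
  shows "rep_act (Transposition.transpose a b \<circ> \<sigma>) (polytabloid N lam \<tau>)
    = - rep_act \<sigma> (polytabloid N lam \<tau>)"
proof
  fix r
  have "inv \<sigma> a \<in> {1..N}" "inv \<sigma> b \<in> {1..N}" "inv \<sigma> a \<noteq> inv \<sigma> b"
    using ab permutes_in_image[OF permutes_inv[OF \<sigma>]] permutes_inv_eq[OF \<sigma>] by auto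
  moreover have "Transposition.transpose a b \<circ> \<sigma> = \<sigma> \<circ> Transposition.transpose (inv \<sigma> a) (inv \<sigma> b)"
    using transpose_comp_eq[OF permutes_bij[OF \<sigma>]] .
  ultimately show "rep_act (Transposition.transpose a b \<circ> \<sigma>) (polytabloid N lam \<tau>) r
      = (- rep_act \<sigma> (polytabloid N lam \<tau>)) r"
    using polytabloid_comp_transpose[OF tau _ _ _ col, of "r \<circ> \<sigma>"]
    unfolding rep_act_def by (simp add: comp_assoc)
qed

lemma act_matching_comp: "act_matching (p \<circ> q) M = act_matching p (act_matching q M)"
  unfolding act_matching_def by (simp add: image_image image_comp)

lemma act_matching_in_matchings:
  assumes p: "p permutes {1..2*n}" and M: "M \<in> matchings n"
  shows "act_matching p M \<in> matchings n"
proof -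
  have inj: "inj p"
    using p by (simp add: permutes_inj)
  have edges: "M \<subseteq> edges_K n" and unique: "\<forall>k\<in>{1..2*n}. \<exists>!e. e \<in> M \<and> k \<in> e"
    using M unfolding matchings_def by auto
  have "p ` e \<in> edges_K n" if "e \<in> M" for e
  proof -
    have "e \<subseteq> {1..2*n}" "card e = 2"
      using edges that unfolding edges_K_def by auto
    then show ?thesis
      using permutes_image[OF p] inj unfolding edges_K_def
      by (metis (mono_tags, lifting) card_image image_mono inj_on_subset mem_Collect_eq subset_UNIV)
  qed
  then have "act_matching p M \<subseteq> edges_K n"
    unfolding act_matching_def by blast
  moreover have "\<exists>!e'. e' \<in> act_matching p M \<and> k \<in> e'" if k: "k \<in> {1..2*n}" for k
  proof -
    have "inv p k \<in> {1..2*n}"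
      using permutes_in_image[OF permutes_inv[OF p]] k by blast
    then obtain e where e: "e \<in> M" "inv p k \<in> e"
      and uq: "\<And>e'. e' \<in> M \<Longrightarrow> inv p k \<in> e' \<Longrightarrow> e' = e"
      using unique by metis
    have mem: "k \<in> p ` e' \<longleftrightarrow> inv p k \<in> e'" for e'
      using inj permutes_inverses(1)[OF p] by (metis image_iff inv_f_f)
    show ?thesis
    proof (rule ex1I[of _ "p ` e"])
      show "p ` e \<in> act_matching p M \<and> k \<in> p ` e"
        using e mem unfolding act_matching_def by blast
      show "e' = p ` e" if "e' \<in> act_matching p M \<and> k \<in> e'" for e'
        using that mem uq unfolding act_matching_def by blast
    qed
  qed
  ultimately show ?thesis
    unfolding matchings_def by blast
qed

lemma indicator_family_act_transpose:
  assumes ab: "a \<in> {1..2*n}" "b \<in> {1..2*n}" and T: "\<forall>e\<in>T. a \<in> e \<longleftrightarrow> b \<in> e"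
  shows "indicator (family n T) (act_matching (Transposition.transpose a b) M)
    = (indicator (family n T) M :: real)"
proof -
  let ?s = "Transposition.transpose a b"
  have s: "?s permutes {1..2*n}"
    using ab by (simp add: permutes_swap_id)
  have involution: "act_matching ?s (act_matching ?s M) = M"
    unfolding act_matching_comp[symmetric] by (simp add: act_matching_def)
  have mem: "X \<in> act_matching ?s M \<longleftrightarrow> ?s ` X \<in> M" for X
  proof
    assume "X \<in> act_matching ?s M"
    then obtain Y where "Y \<in> M" "X = ?s ` Y"
      unfolding act_matching_def by auto
    then show "?s ` X \<in> M"
      by (simp add: image_comp)
  next
    assume "?s ` X \<in> M"
    moreover have "X = ?s ` (?s ` X)"
      by (simp add: image_comp)
    ultimately show "X \<in> act_matching ?s M"
      unfolding act_matching_def by blast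
  qed
  have "T \<subseteq> act_matching ?s M \<longleftrightarrow> T \<subseteq> M"
    using mem T by auto
  moreover have "act_matching ?s M \<in> matchings n \<longleftrightarrow> M \<in> matchings n"
    using act_matching_in_matchings[OF s, of M] act_matching_in_matchings[OF s, of "act_matching ?s M"]
      involution by auto
  ultimately show ?thesis
    unfolding indicator_def family_def by simp
qed

lemma lift_indicator_family_transpose_comp:
  assumes "a \<in> {1..2*n}" "b \<in> {1..2*n}" "\<forall>e\<in>T. a \<in> e \<longleftrightarrow> b \<in> e"
  shows "lift n (indicator (family n T)) (Transposition.transpose a b \<circ> \<sigma>)
    = lift n (indicator (family n T)) \<sigma>"
  unfolding lift_def act_matching_comp using indicator_family_act_transpose[OF assms] .

definition fourier_sum :: "nat \<Rightarrow> (nat set set \<Rightarrow> real) \<Rightarrow> ((nat \<Rightarrow> nat) \<Rightarrow> real) \<Rightarrow> (nat \<Rightarrow> nat) \<Rightarrow> real"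
  where "fourier_sum n f v r = (\<Sum>\<sigma>\<in>{\<sigma>. \<sigma> permutes {1..2*n}}. lift n f \<sigma> * rep_act \<sigma> v r)"

lemma bij_betw_tableau_inv_comp:
  assumes "is_tableau N lam \<tau>" "\<sigma> permutes {1..N}"
  shows "bij_betw (\<lambda>k. inv_into (young_cells lam) \<tau> (inv \<sigma> k)) {1..N} (young_cells lam)"
  using bij_betw_trans[OF permutes_imp_bij[OF permutes_inv[OF assms(2)]]
      bij_betw_inv_into[OF assms(1)[unfolded is_tableau_def]]]
  by (simp add: comp_def)

lemma fourier_sum_indicator_family_polytabloid:
  assumes nt: "2 * t < n" and TE: "T \<subseteq> edges_K n" and cT: "card T = t"
    and disj: "\<forall>e\<in>T. \<forall>e'\<in>T. e \<noteq> e' \<longrightarrow> e \<inter> e' = {}"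
    and part: "is_partition (2*n) \<rho>" and less: "part_less \<rho> (2 * (n - t) # replicate t 2)"
    and tau: "is_tableau (2*n) \<rho> \<tau>"
  shows "fourier_sum n (indicator (family n T)) (polytabloid (2*n) \<rho> \<tau>) r = 0"
proof -
  let ?S = "{\<sigma>. \<sigma> permutes {1..2*n}}"
  define col where "col \<sigma> k = snd (inv_into (young_cells \<rho>) \<tau> (inv \<sigma> k))"
    for \<sigma> :: "nat \<Rightarrow> nat" and k
  define good where "good \<sigma> a b \<longleftrightarrow> a \<in> {1..2*n} \<and> b \<in> {1..2*n} \<and> a \<noteq> b \<and>
    (\<forall>e\<in>T. a \<in> e \<longleftrightarrow> b \<in> e) \<and> col \<sigma> a = col \<sigma> b" for \<sigma> a b
  define a where "a \<sigma> = fst (SOME p. good \<sigma> (fst p) (snd p))" for \<sigma>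
  define b where "b \<sigma> = snd (SOME p. good \<sigma> (fst p) (snd p))" for \<sigma>
  define swap where "swap \<sigma> = Transposition.transpose (a \<sigma>) (b \<sigma>)" for \<sigma>
  have good: "good \<sigma> (a \<sigma>) (b \<sigma>)" if "\<sigma> \<in> ?S" for \<sigma>
  proof -
    have "sorted (rev \<rho>)"
      using part unfolding is_partition_def by blast
    moreover have "bij_betw (\<lambda>k. inv_into (young_cells \<rho>) \<tau> (inv \<sigma> k)) {1..2*n} (young_cells \<rho>)"
      using bij_betw_tableau_inv_comp[OF tau] that by simp
    ultimately obtain x y where "x \<in> {1..2*n}" "y \<in> {1..2*n}" "x \<noteq> y" "\<forall>e\<in>T. x \<in> e \<longleftrightarrow> y \<in> e"
      "col \<sigma> x = col \<sigma> y"
      using exists_column_pair_in_same_class[OF nt TE cT disj _ less] unfolding col_def bij_betw_def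
      by (metis order_refl)
    then have "\<exists>p. good \<sigma> (fst p) (snd p)"
      unfolding good_def by (intro exI[of _ "(x, y)"]) simp
    then show ?thesis
      unfolding a_def b_def by (rule someI_ex)
  qed
  \<comment> \<open>swap depends on sigma only through col sigma, which it preserves, so
     composing with swap is an involution.\<close>
  have col_swap: "col (swap \<sigma> \<circ> \<sigma>) = col \<sigma>" if "\<sigma> \<in> ?S" for \<sigma>
  proof
    fix k
    have "inv (swap \<sigma> \<circ> \<sigma>) = inv \<sigma> \<circ> swap \<sigma>"
      using that unfolding swap_def by (simp add: o_inv_distrib permutes_bij)
    then show "col (swap \<sigma> \<circ> \<sigma>) k = col \<sigma> k"
      using good[OF that] unfolding col_def good_def swap_def
      by (cases "k = a \<sigma>"; cases "k = b \<sigma>") auto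
  qed
  show ?thesis
    unfolding fourier_sum_def
  proof (rule sum_involution_eq_0[where h = "\<lambda>\<sigma>. swap \<sigma> \<circ> \<sigma>"])
    fix \<sigma> assume \<sigma>: "\<sigma> \<in> ?S"
    have abP: "a \<sigma> \<in> {1..2*n}" "b \<sigma> \<in> {1..2*n}" "a \<sigma> \<noteq> b \<sigma>" "\<forall>e\<in>T. a \<sigma> \<in> e \<longleftrightarrow> b \<sigma> \<in> e"
      "col \<sigma> (a \<sigma>) = col \<sigma> (b \<sigma>)"
      using good[OF \<sigma>] unfolding good_def by auto
    show "swap \<sigma> \<circ> \<sigma> \<in> ?S"
      using \<sigma> abP unfolding swap_def by (simp add: permutes_compose permutes_swap_id)
    show "swap (swap \<sigma> \<circ> \<sigma>) \<circ> (swap \<sigma> \<circ> \<sigma>) = \<sigma>"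
      using col_swap[OF \<sigma>] unfolding swap_def a_def b_def good_def
      by (simp add: comp_assoc[symmetric])
    show "swap \<sigma> \<circ> \<sigma> \<noteq> \<sigma>"
    proof
      assume "swap \<sigma> \<circ> \<sigma> = \<sigma>"
      then have "swap \<sigma> (\<sigma> (inv \<sigma> (a \<sigma>))) = \<sigma> (inv \<sigma> (a \<sigma>))"
        by (metis comp_apply)
      then show False
        using abP(3) permutes_inverses(1)[of \<sigma>] \<sigma> unfolding swap_def by simp
    qed
    show "lift n (indicator (family n T)) (swap \<sigma> \<circ> \<sigma>) * rep_act (swap \<sigma> \<circ> \<sigma>) (polytabloid (2*n) \<rho> \<tau>) r
      + lift n (indicator (family n T)) \<sigma> * rep_act \<sigma> (polytabloid (2*n) \<rho> \<tau>) r = 0"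
      using lift_indicator_family_transpose_comp[OF abP(1,2,4)]
        rep_act_transpose_comp_polytabloid[OF tau _ abP(1-3)] abP(5) \<sigma>
      unfolding col_def swap_def by simp
  qed
qed

lemma module_pointwise_scale: "module (\<lambda>(c::real) (g::'a \<Rightarrow> real) x. c * g x)"
  by unfold_locales (auto simp: fun_eq_iff algebra_simps)

lemma fourier_zero_iff:
  "fourier_zero n f lam \<longleftrightarrow> (\<forall>v\<in>specht (2*n) lam. \<forall>r. fourier_sum n f v r = 0)"
  unfolding fourier_zero_def fourier_sum_def by (simp add: fun_eq_iff)

lemma fourier_sum_add:
  "fourier_sum n (f + g) v r = fourier_sum n f v r + fourier_sum n g v r"
  "fourier_sum n f (v + w) r = fourier_sum n f v r + fourier_sum n f w r"
  unfolding fourier_sum_def lift_def rep_act_def by (simp_all add: sum.distrib algebra_simps)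

lemma fourier_sum_scale:
  "fourier_sum n (\<lambda>x. c * f x) v r = c * fourier_sum n f v r"
  "fourier_sum n f (\<lambda>x. c * v x) r = c * fourier_sum n f v r"
  unfolding fourier_sum_def lift_def rep_act_def by (simp_all add: sum_distrib_left algebra_simps)

lemma fourier_sum_zero:
  "fourier_sum n 0 v r = 0"
  "fourier_sum n f 0 r = 0"
  unfolding fourier_sum_def lift_def rep_act_def by simp_all

lemma fourier_zero_if_polytabloids:
  assumes "\<And>\<tau> r. is_tableau (2*n) lam \<tau> \<Longrightarrow> fourier_sum n f (polytabloid (2*n) lam \<tau>) r = 0"
  shows "fourier_zero n f lam"
proof -
  have "specht (2*n) lam \<subseteq> {v. \<forall>r. fourier_sum n f v r = 0}"
    unfolding specht_def
  proof (rule module.span_minimal[OF module_pointwise_scale])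
    show "module.subspace (\<lambda>c v x. c * v x) {v. \<forall>r. fourier_sum n f v r = 0}"
      unfolding module.subspace_def[OF module_pointwise_scale]
      by (simp add: fourier_sum_add fourier_sum_scale fourier_sum_zero)
  qed (use assms in auto)
  then show ?thesis
    unfolding fourier_zero_iff by blast
qed

lemma subspace_U: "module.subspace (\<lambda>c g x. c * g x) (U n t)"
  unfolding module.subspace_def[OF module_pointwise_scale] U_def fourier_zero_iff
  by (simp add: fourier_sum_add fourier_sum_scale fourier_sum_zero)

lemma indicator_family_in_U:
  assumes "2 * t < n" "T \<subseteq> edges_K n" "card T = t"
    "\<forall>e\<in>T. \<forall>e'\<in>T. e \<noteq> e' \<longrightarrow> e \<inter> e' = {}"
  shows "indicator (family n T) \<in> U n t"
  unfolding U_def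
  using fourier_zero_if_polytabloids fourier_sum_indicator_family_polytabloid[OF assms] by simp

theorem mainTheorem2:
  fixes n t :: nat
  assumes "2 * t < n"
  shows "module.span (\<lambda>c g x. c * g x)
           {indicator (family n T) | T. T \<subseteq> edges_K n \<and> card T = t \<and>
              (\<forall>e\<in>T. \<forall>e'\<in>T. e \<noteq> e' \<longrightarrow> e \<inter> e' = {})}
         \<subseteq> U n t"
  by (rule module.span_minimal[OF module_pointwise_scale])
     (use indicator_family_in_U[OF assms] subspace_U in auto)

end
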